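(* Let $i\ge 3$ and $k\ge 3$ be integers. Then: (a) $g_3(L_i,L_{i+2},L_{i+k})=(4L_i-1)L_{i+2}-L_i$ whenever $k\ge i+5$; (b) $g_3(L_i,L_{i+2},L_{2i+4})=(4F_{i-1}-F_{i-2}-1)L_{i+2}+L_{2i+4}-L_i$; (c) $g_3(L_i,L_{i+2},L_{2i+3})=(4F_{i+1}-1)L_{i+2}-L_i$; (d) $g_3(L_i,L_{i+2},L_{2i+2})=(F_i+2F_{i-3}-1)L_{i+2}+2L_{2i+2}-L_i$; (e) $g_3(L_i,L_{i+2},L_{2i+1})=(F_{i-1}-1)L_{i+2}+3L_{2i+1}-L_i$; (f) $g_3(L_i,L_{i+2},L_{2i})=(2F_{i-3}-1)L_{i+2}+4L_{2i}-L_i$ for $i\ge 4$, and $g_3(L_3,L_5,L_6)=3L_5+2L_6-L_3=69$; (g) if $r=\lfloor (L_i-1)/F_k\rfloor\ge 3$ (equivalently $k\le i-1$), then $$g_3(L_i,L_{i+2},L_{i+k})=\begin{cases}(L_i-rF_k-1)L_{i+2}+(r+3)L_{i+k}-L_i & \text{if } (L_i-rF_k)L_{i+2}\ge F_{k-2}L_i,\\ (F_k-1)L_{i+2}+(r+2)L_{i+k}-L_i & \text{if } (L_i-rF_k)L_{i+2}< F_{k-2}L_i.\end{cases}$$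
   Context: Fibonacci numbers: $F_0=0$, $F_1=1$, $F_n=F_{n-1}+F_{n-2}$. Lucas numbers: $L_0=2$, $L_1=1$, $L_n=L_{n-1}+L_{n-2}$. For positive integers $a_1,\dots,a_l$ with $\gcd(a_1,\dots,a_l)=1$ and an integer $n$, let $d(n;a_1,\dots,a_l)$ be the number of tuples $(x_1,\dots,x_l)$ of nonnegative integers with $a_1x_1+\dots+a_lx_l=n$. For a nonnegative integer $p$, the $p$-Frobenius number $g_p(a_1,\dots,a_l)$ is the largest integer $n$ with $d(n;a_1,\dots,a_l)\le p$. *)

theory Defs
  imports Main "HOL-Number_Theory.Fib"
begin

fun lucas :: "nat \<Rightarrow> nat" where
  "lucas 0 = 2"
| "lucas (Suc 0) = 1"
| "lucas (Suc (Suc n)) = lucas (Suc n) + lucas n"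

definition num_reps :: "int \<Rightarrow> nat list \<Rightarrow> nat" where
  "num_reps n as = card {xs :: nat list. length xs = length as \<and>
      int (\<Sum>j<length as. as ! j * xs ! j) = n}"

definition p_frobenius :: "nat \<Rightarrow> nat list \<Rightarrow> int" where
  "p_frobenius p as = (GREATEST n :: int. num_reps n as \<le> p)"

end

theory Submission
  imports Defs
begin

text \<open>Write a = L_i, b = L_(i+2), m = F_k and t = F_(k-2), so that L_(i+k) = m b - t a. Since a and b
  are coprime, every integer is n = b s + a e with a unique residue 0 \<le> s < a, and the solutions
  (x, y, z) of a x + b y + L_(i+k) z = n correspond to the lattice points (j, z) with
  y = s + j a - m z \<ge> 0 and x = e - j b + t z \<ge> 0. Their number grows with e, so g_3 = G follows from
  two certificates: G itself has at most three lattice points, and every residue class contains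
  an element at most G + a with four. In each case of the theorem both certificates are small
  explicit configurations of lattice points, checked by inequalities between F_(i-1) and F_i.\<close>

lemma lucas_Suc_eq_fib: "lucas (Suc n) = fib n + fib (Suc (Suc n))"
  by (induction n rule: fib.induct) (simp_all add: numeral_2_eq_2)

lemma lucas_add:
  "int (lucas (i + k + 2)) = int (fib (k + 2)) * int (lucas (i + 2)) - int (fib k) * int (lucas i)"
proof (induction k rule: fib.induct)
  case (3 n)
  have "i + Suc (Suc n) + 2 = Suc (Suc (i + n + 2))" "i + Suc n + 2 = Suc (i + n + 2)" by simp_all
  with 3 show ?case by (simp add: algebra_simps)
qed (simp_all add: numeral_2_eq_2)

lemma coprime_lucas_Suc: "coprime (lucas n) (lucas (Suc n))"
proof (induction n)
  case (Suc n)
  then show ?case by (simp add: coprime_iff_gcd_eq_1 gcd.commute[of "lucas (Suc n)"])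
qed simp

lemma coprime_lucas_add_2: "coprime (lucas n) (lucas (n + 2))"
  using coprime_lucas_Suc[of n] by (simp add: numeral_2_eq_2 coprime_iff_gcd_eq_1 add.commute)

lemma lucas_pos: "0 < lucas n"
  by (induction n rule: lucas.induct) simp_all

section \<open>Representations as lattice points\<close>

lemma le_of_mult_le_less_mult:
  fixes m z K q :: int
  assumes "0 < m" "m * z \<le> K" "K < m * (q + 1)"
  shows "z \<le> q"
proof -
  have "m * z < m * (q + 1)" using assms(2,3) by linarith
  then show ?thesis using assms(1) by (simp add: mult_less_cancel_left_pos)
qed

lemma pos_div_mult_bounds:
  fixes s m :: int
  assumes "0 < m"
  shows "m * (s div m) \<le> s" "s < m * (s div m) + m"
  using mult_div_mod_eq[of m s] pos_mod_bound[OF assms, of s] pos_mod_sign[OF assms, of s] by linarith+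

definition lattice_reps :: "int \<Rightarrow> int \<Rightarrow> int \<Rightarrow> int \<Rightarrow> int \<Rightarrow> int \<Rightarrow> (nat \<times> nat) set" where
  "lattice_reps a b m t s e =
     {(j, z). m * int z \<le> s + int j * a \<and> int j * b - t * int z \<le> e}"

lemma mem_lattice_reps [simp]:
  "(j, z) \<in> lattice_reps a b m t s e
    \<longleftrightarrow> m * int z \<le> s + int j * a \<and> int j * b - t * int z \<le> e"
  by (simp add: lattice_reps_def)

lemma lattice_reps_mono:
  "s \<le> s' \<Longrightarrow> e \<le> e' \<Longrightarrow> lattice_reps a b m t s e \<subseteq> lattice_reps a b m t s' e'"
  by (auto simp: lattice_reps_def)

lemma lattice_reps_snd_le:
  assumes "m > 0" "(j, z) \<in> lattice_reps a b m t s e" "s + int j * a < m * (q + 1)"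
  shows "int z \<le> q"
  using assms le_of_mult_le_less_mult[of m "int z" "s + int j * a" q] by simp

lemma lattice_reps_fst_less:
  assumes "m > 0" "t \<ge> 0" "m * b - t * a > 0" "m * e < int J * (m * b - t * a) - t * s"
    and "(j, z) \<in> lattice_reps a b m t s e"
  shows "j < J"
proof (rule ccontr)
  assume "\<not> j < J"
  then have "int J * (m * b - t * a) \<le> int j * (m * b - t * a)"
    using assms(3) by (simp add: mult_right_mono)
  also have "\<dots> - t * s \<le> m * (int j * b - t * int z)"
  proof -
    have "t * (m * int z) \<le> t * (s + int j * a)" using assms(2,5) by (simp add: mult_left_mono)
    then show ?thesis by (simp add: algebra_simps)
  qed
  also have "\<dots> \<le> m * e" using assms(1,5) by simp
  finally show False using assms(4) by linarith
qed

lemma finite_lattice_reps: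
  assumes "a > 0" "m > 0" "t \<ge> 0" "m * b - t * a > 0"
  shows "finite (lattice_reps a b m t s e)"
proof -
  define J where "J = nat (m * e + t * s) + 1"
  have J: "m * e < int J * (m * b - t * a) - t * s"
  proof -
    have "int J \<le> int J * (m * b - t * a)" using assms(4) by (simp add: mult_le_cancel_left1)
    then show ?thesis unfolding J_def by linarith
  qed
  have "lattice_reps a b m t s e \<subseteq> {..<J} \<times> {..nat (s + int J * a)}"
  proof (rule subrelI)
    fix j z assume p: "(j, z) \<in> lattice_reps a b m t s e"
    then have "j < J" using lattice_reps_fst_less[OF assms(2-4) J] by blast
    then have "int j * a \<le> int J * a" using assms(1) by simp
    moreover have "int z \<le> m * int z" using assms(2) by (simp add: mult_le_cancel_right1)
    ultimately have "int z \<le> s + int J * a" using p by simp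
    then show "(j, z) \<in> {..<J} \<times> {..nat (s + int J * a)}" using \<open>j < J\<close> by simp
  qed
  then show ?thesis by (rule finite_subset) simp
qed

lemma exists_residue_repr:
  fixes a b n :: int
  assumes "a > 0" "coprime a b"
  obtains s e where "0 \<le> s" "s < a" "n = b * s + a * e"
proof -
  obtain u v where "u * a + v * b = 1"
    using bezout_int[of a b] assms(2) by (auto simp: coprime_iff_gcd_eq_1)
  define s where "s = (n * v) mod a"
  have "n - b * s = a * (n * u + b * (n * v div a))"
  proof -
    have "n * v = a * (n * v div a) + s" unfolding s_def by simp
    then have "n - b * s = n * (u * a + v * b) - b * (n * v - a * (n * v div a))"
      using \<open>u * a + v * b = 1\<close> by simp
    then show ?thesis by (simp add: algebra_simps)
  qed
  moreover have "0 \<le> s" "s < a" unfolding s_def using assms(1) by auto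
  ultimately show ?thesis using that[of s "n * u + b * (n * v div a)"] by (simp add: algebra_simps)
qed

lemma num_reps_eq_card_lattice_reps:
  fixes a b m t s e :: int
  defines "c \<equiv> m * b - t * a"
  assumes "a > 0" "m > 0" "t \<ge> 0" "c > 0" "coprime a b" "0 \<le> s" "s < a"
  shows "num_reps (b * s + a * e) [nat a, nat b, nat c] = card (lattice_reps a b m t s e)"
proof -
  have "t * a \<ge> 0" using \<open>t \<ge> 0\<close> \<open>a > 0\<close> by simp
  then have "m * b > 0" using \<open>c > 0\<close> unfolding c_def by linarith
  then have "b > 0" using \<open>m > 0\<close> by (simp add: zero_less_mult_iff)
  define S where "S = {xs :: nat list. length xs = 3 \<and>
    a * int (xs ! 0) + b * int (xs ! 1) + c * int (xs ! 2) = b * s + a * e}"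
  define f where
    "f = (\<lambda>(j, z). [nat (e - int j * b + t * int z), nat (s + int j * a - m * int z), z])"
  have "num_reps (b * s + a * e) [nat a, nat b, nat c] = card S"
    unfolding num_reps_def S_def using \<open>a > 0\<close> \<open>b > 0\<close> \<open>c > 0\<close>
    by (simp add: numeral_3_eq_3 numeral_2_eq_2 lessThan_Suc algebra_simps)
  also have "S = f ` lattice_reps a b m t s e"
  proof
    show "f ` lattice_reps a b m t s e \<subseteq> S"
    proof clarify
      fix j z assume "(j, z) \<in> lattice_reps a b m t s e"
      moreover have "a * (e - int j * b + t * int z) + b * (s + int j * a - m * int z) + c * int z
          = b * s + a * e"
        unfolding c_def by (simp add: algebra_simps)
      ultimately show "f (j, z) \<in> S" unfolding S_def f_def by simp
    qed
  next
    show "S \<subseteq> f ` lattice_reps a b m t s e"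
    proof
      fix xs assume "xs \<in> S"
      then obtain x y z where xs: "xs = [x, y, z]"
        and eq: "a * int x + b * int y + c * int z = b * s + a * e"
        unfolding S_def by (auto simp: numeral_3_eq_3 length_Suc_conv)
      have "b * (int y + m * int z - s) = a * (e - int x + t * int z)"
        using eq unfolding c_def by (simp add: algebra_simps)
      then have "a dvd int y + m * int z - s"
        using \<open>coprime a b\<close> by (metis coprime_dvd_mult_right_iff dvd_triv_left)
      then obtain j where j: "int y + m * int z - s = a * j" by (elim dvdE)
      have "j \<ge> 0"
      proof (rule ccontr)
        assume "\<not> j \<ge> 0"
        then have "a * j \<le> a * (-1)" using \<open>a > 0\<close> by (intro mult_left_mono) auto
        moreover have "m * int z \<ge> 0" using \<open>m > 0\<close> by simp
        ultimately show False using j \<open>s < a\<close> by linarith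
      qed
      have "b * (a * j) = a * (e - int x + t * int z)"
        using \<open>b * _ = _\<close> j by simp
      then have "a * (e - int (nat j) * b + t * int z) = a * int x"
        using \<open>j \<ge> 0\<close> by (simp add: algebra_simps)
      then have x: "e - int (nat j) * b + t * int z = int x" using \<open>a > 0\<close> by simp
      have y: "s + int (nat j) * a - m * int z = int y"
        using j \<open>j \<ge> 0\<close> by (simp add: algebra_simps)
      have "(nat j, z) \<in> lattice_reps a b m t s e" and "f (nat j, z) = xs"
        unfolding f_def xs using x y by (simp_all add: algebra_simps)
      then show "xs \<in> f ` lattice_reps a b m t s e" by (metis image_eqI)
    qed
  qed
  also have "card \<dots> = card (lattice_reps a b m t s e)"
  proof (rule card_image, rule inj_onI, clarify)
    fix j z j' z'
    assume "(j, z) \<in> lattice_reps a b m t s e" "(j', z') \<in> lattice_reps a b m t s e"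
      and "f (j, z) = f (j', z')"
    then have "z = z'" "s + int j * a - m * int z = s + int j' * a - m * int z'"
      unfolding f_def by (auto simp: eq_nat_nat_iff)
    then show "j = j' \<and> z = z'" using \<open>a > 0\<close> by simp
  qed
  finally show ?thesis .
qed

section \<open>Certificates for the 3-Frobenius number\<close>

definition four_reps_le :: "int \<Rightarrow> int \<Rightarrow> int \<Rightarrow> int \<Rightarrow> int \<Rightarrow> int \<Rightarrow> bool" where
  "four_reps_le a b m t s N \<longleftrightarrow> (\<exists>v ps. distinct ps \<and> length ps = 4
     \<and> set ps \<subseteq> lattice_reps a b m t s v \<and> b * s + a * v \<le> N)"

text \<open>If b s + a v \<le> G + a, every n = b s + a e > G has e \<ge> v and hence four representations.\<close>

definition four_reps_beyond :: "int \<Rightarrow> int \<Rightarrow> int \<Rightarrow> int \<Rightarrow> int \<Rightarrow> bool" where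
  "four_reps_beyond a b m t G \<longleftrightarrow>
     (\<forall>s. 0 \<le> s \<longrightarrow> s < a \<longrightarrow> four_reps_le a b m t s (G + a))"

definition three_reps_at :: "int \<Rightarrow> int \<Rightarrow> int \<Rightarrow> int \<Rightarrow> int \<Rightarrow> bool" where
  "three_reps_at a b m t G \<longleftrightarrow>
     (\<exists>s e. 0 \<le> s \<and> s < a \<and> G = b * s + a * e \<and> card (lattice_reps a b m t s e) \<le> 3)"

lemma four_reps_le_intervalI:
  assumes "b \<ge> 0" "lo \<le> s" "s < hi"
    and "distinct ps" "length ps = 4" "set ps \<subseteq> lattice_reps a b m t lo v"
    and "b * (hi - 1) + a * v \<le> N"
  shows "four_reps_le a b m t s N"
proof -
  have "set ps \<subseteq> lattice_reps a b m t s v"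
    using assms(2,6) lattice_reps_mono[of lo s v v] by blast
  moreover have "b * s \<le> b * (hi - 1)" using assms(1,3) by (simp add: mult_left_mono)
  ultimately show ?thesis unfolding four_reps_le_def using assms(4,5,7) by force
qed

lemma four_reps_leI:
  assumes "set ps \<subseteq> lattice_reps a b m t s v" "distinct ps" "length ps = 4" "b * s + a * v \<le> N"
  shows "four_reps_le a b m t s N"
  using assms unfolding four_reps_le_def by blast

lemma four_reps_le_mono:
  "four_reps_le a b m t s N \<Longrightarrow> N \<le> N' \<Longrightarrow> four_reps_le a b m t s N'"
  unfolding four_reps_le_def by force

lemma three_reps_atI:
  assumes "0 \<le> s" "s < a" "G = b * s + a * e" "lattice_reps a b m t s e \<subseteq> {p, q, r}"
  shows "three_reps_at a b m t G"
proof -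
  have "card (lattice_reps a b m t s e) \<le> card {p, q, r}" using assms(4) by (simp add: card_mono)
  also have "\<dots> \<le> 3" by (simp add: card_insert_if)
  finally show ?thesis unfolding three_reps_at_def using assms(1-3) by blast
qed

theorem p_frobenius_3_eqI:
  fixes a b m t G :: int
  assumes "a > 0" "m > 0" "t \<ge> 0" "m * b - t * a > 0" "coprime a b"
    and "four_reps_beyond a b m t G" "three_reps_at a b m t G"
  shows "p_frobenius 3 [nat a, nat b, nat (m * b - t * a)] = G"
  unfolding p_frobenius_def
proof (rule Greatest_equality)
  from \<open>three_reps_at a b m t G\<close> obtain s e where "0 \<le> s" "s < a" "G = b * s + a * e"
    and "card (lattice_reps a b m t s e) \<le> 3"
    unfolding three_reps_at_def by blast
  then show "num_reps G [nat a, nat b, nat (m * b - t * a)] \<le> 3"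
    using num_reps_eq_card_lattice_reps assms(1-5) by simp
next
  fix n assume n: "num_reps n [nat a, nat b, nat (m * b - t * a)] \<le> 3"
  obtain s e where s: "0 \<le> s" "s < a" and n_eq: "n = b * s + a * e"
    using exists_residue_repr[OF \<open>a > 0\<close> \<open>coprime a b\<close>] .
  from \<open>four_reps_beyond a b m t G\<close> s obtain v ps where ps: "distinct ps" "length ps = 4"
      "set ps \<subseteq> lattice_reps a b m t s v" and v: "b * s + a * v \<le> G + a"
    unfolding four_reps_beyond_def four_reps_le_def by blast
  show "n \<le> G"
  proof (rule ccontr)
    assume "\<not> n \<le> G"
    with n_eq v have "a * v < a * (e + 1)" by (simp add: algebra_simps)
    then have "v \<le> e" using \<open>a > 0\<close> by simp
    have "4 = card (set ps)" using ps by (simp add: distinct_card)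
    also have "\<dots> \<le> card (lattice_reps a b m t s e)"
    proof (rule card_mono)
      show "finite (lattice_reps a b m t s e)" by (rule finite_lattice_reps[OF assms(1-4)])
      show "set ps \<subseteq> lattice_reps a b m t s e"
        using ps(3) lattice_reps_mono[OF order_refl \<open>v \<le> e\<close>] by blast
    qed
    also have "\<dots> = num_reps n [nat a, nat b, nat (m * b - t * a)]"
      using num_reps_eq_card_lattice_reps assms(1-5) s n_eq by simp
    finally show False using n by simp
  qed
qed

section \<open>The third generator L_(2i+j) for j \<le> 4\<close>

lemma ratio_products_bounds:
  fixes x y :: int
  assumes "1 \<le> x" "x \<le> y" "y \<le> 2 * x" "3 * x \<le> 2 * y"
  shows "1 \<le> x * x" "x * x \<le> x * y" "x * y \<le> y * y" "y * y \<le> 2 * (x * y)"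
    "x * y \<le> 2 * (x * x)" "3 * (x * x) \<le> 2 * (x * y)" "3 * (x * y) \<le> 2 * (y * y)"
proof -
  have "0 \<le> x" "0 \<le> y" using assms by auto
  show "1 \<le> x * x" using mult_mono[OF assms(1) assms(1)] \<open>0 \<le> x\<close> by simp
  show "x * x \<le> x * y" "x * y \<le> y * y" using assms \<open>0 \<le> x\<close> \<open>0 \<le> y\<close>
    by (simp_all add: mult_left_mono mult_right_mono)
  show "y * y \<le> 2 * (x * y)" using mult_right_mono[OF assms(3) \<open>0 \<le> y\<close>] by simp
  show "x * y \<le> 2 * (x * x)" using mult_left_mono[OF assms(3) \<open>0 \<le> x\<close>] by (simp add: ac_simps)
  show "3 * (x * x) \<le> 2 * (x * y)" using mult_right_mono[OF assms(4) \<open>0 \<le> x\<close>] by (simp add: ac_simps)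
  show "3 * (x * y) \<le> 2 * (y * y)" using mult_right_mono[OF assms(4) \<open>0 \<le> y\<close>] by (simp add: ac_simps)
qed

lemma ratio_products_bounds_tight:
  fixes x y :: int
  assumes "1 \<le> x" "x \<le> y" "3 * y \<le> 5 * x"
  shows "3 * (y * y) \<le> 5 * (x * y)" "3 * (x * y) \<le> 5 * (x * x)"
  using mult_right_mono[OF assms(3), of y] mult_left_mono[OF assms(3), of x] assms(1,2)
  by (simp_all add: algebra_simps)

text \<open>In the lemmas on shift j the parameters are x = F_(i-1) and y = F_i, so that a = L_i,
  b = L_(i+2), m = F_(i+j+2) and t = F_(i+j): the third generator is L_(2i+j).\<close>

lemma four_reps_beyond_shift_4:
  fixes x y :: int
  assumes "1 \<le> x" "x \<le> y" "y \<le> 2 * x" "3 * x \<le> 2 * y"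
  defines "a \<equiv> 2 * x + y" and "b \<equiv> 3 * x + 4 * y"
    and "m \<equiv> 3 * x + 5 * y" and "t \<equiv> x + 2 * y"
  defines "G \<equiv> (4 * a - 1) * b - t * a - a"
  shows "four_reps_beyond a b m t G"
  unfolding four_reps_beyond_def
proof (intro allI impI)
  note P = ratio_products_bounds[OF assms(1-4)]
  note defs = a_def b_def m_def t_def G_def
  have b0: "b \<ge> 0" using assms(1-4) unfolding defs by simp
  fix s assume s: "0 \<le> s" "s < a"
  consider "s < 2 * y - 3 * x" | "2 * y - 3 * x \<le> s" by linarith
  then show "four_reps_le a b m t s (G + a)"
  proof cases
    case 1
    show ?thesis
    proof (rule four_reps_le_intervalI[OF b0 s(1) 1, where ps = "[(0, 0), (1, 0), (2, 0), (3, 0)]"])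
      show "b * (2 * y - 3 * x - 1) + a * (3 * b) \<le> G + a"
        by (simp add: defs algebra_simps) (use P in linarith)
    qed (use assms(1-4) in \<open>simp_all add: defs\<close>)
  next
    case 2
    show ?thesis
    proof (rule four_reps_le_intervalI[OF b0 2 s(2), where ps = "[(0, 0), (1, 0), (2, 0), (3, 1)]"])
      show "b * (a - 1) + a * (3 * b - t) \<le> G + a" by (simp add: defs algebra_simps)
    qed (use assms(1-4) in \<open>simp_all add: defs\<close>)
  qed
qed

lemma three_reps_at_shift_4:
  fixes x y :: int
  assumes "1 \<le> x" "x \<le> y" "y \<le> 2 * x" "3 * x \<le> 2 * y"
  defines "a \<equiv> 2 * x + y" and "b \<equiv> 3 * x + 4 * y"
    and "m \<equiv> 3 * x + 5 * y" and "t \<equiv> x + 2 * y"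
  defines "G \<equiv> (4 * a - 1) * b - t * a - a"
  shows "three_reps_at a b m t G"
proof -
  note P = ratio_products_bounds[OF assms(1-4)]
  note defs = a_def b_def m_def t_def G_def
  have "lattice_reps a b m t (a - 1) (3 * b - t - 1) \<subseteq> {(0, 0), (1, 0), (2, 0)}"
  proof (rule subrelI)
    fix j z assume p: "(j, z) \<in> lattice_reps a b m t (a - 1) (3 * b - t - 1)"
    have "j < 4"
    proof (rule lattice_reps_fst_less[OF _ _ _ _ p])
      show "m * (3 * b - t - 1) < int 4 * (m * b - t * a) - t * (a - 1)"
        by (simp add: defs algebra_simps) (use assms(1-4) P in linarith)
      show "m * b - t * a > 0" by (simp add: defs algebra_simps) (use assms(1-4) P in linarith)
    qed (use assms(1-4) in \<open>simp_all add: defs\<close>)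
    then consider "j \<le> 2" | "j = 3" by linarith
    then show "(j, z) \<in> {(0, 0), (1, 0), (2, 0)}"
    proof cases
      case 1
      then have "int j * a \<le> 2 * a" using assms(1-4) by (intro mult_right_mono) (auto simp: defs)
      then have "int z \<le> 0"
        by (intro lattice_reps_snd_le[OF _ p]) (use assms(1-4) in \<open>simp_all add: defs\<close>)
      then show ?thesis using 1 by auto
    next
      case 2
      then have "int z \<le> 1" 
        by (intro lattice_reps_snd_le[OF _ p]) (use assms(1-4) in \<open>simp_all add: defs\<close>)
      then have "z = 0 \<or> z = 1" by linarith
      then show ?thesis using p 2 assms(1-4) by (auto simp: defs)
    qed
  qed
  then show ?thesis
    by (rule three_reps_atI[rotated 3]) (use assms(1-4) in \<open>simp_all add: defs algebra_simps\<close>)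
qed

lemma four_reps_beyond_shift_3:
  fixes x y :: int
  assumes "1 \<le> x" "x \<le> y" "y \<le> 2 * x" "3 * x \<le> 2 * y"
  defines "a \<equiv> 2 * x + y" and "b \<equiv> 3 * x + 4 * y"
    and "m \<equiv> 2 * x + 3 * y" and "t \<equiv> x + y"
  defines "G \<equiv> (4 * (x + y) - 1) * b - a"
  shows "four_reps_beyond a b m t G"
  unfolding four_reps_beyond_def
proof (intro allI impI)
  note P = ratio_products_bounds[OF assms(1-4)]
  note defs = a_def b_def m_def t_def G_def
  have b0: "b \<ge> 0" using assms(1-4) unfolding defs by simp
  fix s assume s: "0 \<le> s" "s < a"
  consider "s < 2 * y" | "2 * y \<le> s" by linarith
  then show "four_reps_le a b m t s (G + a)"
  proof cases
    case 1
    show ?thesis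
    proof (rule four_reps_le_intervalI[OF b0 s(1) 1, where ps = "[(0, 0), (1, 0), (2, 0), (2, 1)]"])
      show "b * (2 * y - 1) + a * (2 * b) \<le> G + a" by (simp add: defs algebra_simps)
    qed (use assms(1-4) in \<open>simp_all add: defs\<close>)
  next
    case 2
    show ?thesis
    proof (rule four_reps_le_intervalI[OF b0 2 s(2), where ps = "[(0, 0), (1, 0), (1, 1), (2, 1)]"])
      show "b * (a - 1) + a * (2 * b - t) \<le> G + a"
        by (simp add: defs algebra_simps) (use P in linarith)
    qed (use assms(1-4) in \<open>simp_all add: defs\<close>)
  qed
qed

lemma three_reps_at_shift_3:
  fixes x y :: int
  assumes "1 \<le> x" "x \<le> y" "y \<le> 2 * x" "3 * x \<le> 2 * y"
  defines "a \<equiv> 2 * x + y" and "b \<equiv> 3 * x + 4 * y"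
    and "m \<equiv> 2 * x + 3 * y" and "t \<equiv> x + y"
  defines "G \<equiv> (4 * (x + y) - 1) * b - a"
  shows "three_reps_at a b m t G"
proof -
  note P = ratio_products_bounds[OF assms(1-4)]
  note defs = a_def b_def m_def t_def G_def
  have "lattice_reps a b m t (2 * y - 1) (2 * b - 1) \<subseteq> {(0, 0), (1, 0), (2, 1)}"
  proof (rule subrelI)
    fix j z assume p: "(j, z) \<in> lattice_reps a b m t (2 * y - 1) (2 * b - 1)"
    have "j < 3"
    proof (rule lattice_reps_fst_less[OF _ _ _ _ p])
      show "m * (2 * b - 1) < int 3 * (m * b - t * a) - t * (2 * y - 1)"
        by (simp add: defs algebra_simps) (use assms(1-4) P in linarith)
      show "m * b - t * a > 0" by (simp add: defs algebra_simps) (use assms(1-4) P in linarith)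
    qed (use assms(1-4) in \<open>simp_all add: defs\<close>)
    then consider "j = 0" | "j = 1" | "j = 2" by linarith
    then show "(j, z) \<in> {(0, 0), (1, 0), (2, 1)}"
    proof cases
      case 1
      then have "int z \<le> 0"
        by (intro lattice_reps_snd_le[OF _ p]) (use assms(1-4) in \<open>simp_all add: defs\<close>)
      then show ?thesis using 1 by auto
    next
      case 2
      then have "int z \<le> 0"
        by (intro lattice_reps_snd_le[OF _ p]) (use assms(1-4) in \<open>simp_all add: defs\<close>)
      then show ?thesis using 2 by auto
    next
      case 3
      then have "int z \<le> 1"
        by (intro lattice_reps_snd_le[OF _ p]) (use assms(1-4) in \<open>simp_all add: defs\<close>)
      then have "z = 0 \<or> z = 1" by linarith
      then show ?thesis using p 3 assms(1-4) by (auto simp: defs)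
    qed
  qed
  then show ?thesis
    by (rule three_reps_atI[rotated 3]) (use assms(1-4) in \<open>simp_all add: defs algebra_simps\<close>)
qed

lemma four_reps_beyond_shift_2:
  fixes x y :: int
  assumes "1 \<le> x" "x \<le> y" "y \<le> 2 * x" "3 * x \<le> 2 * y"
  defines "a \<equiv> 2 * x + y" and "b \<equiv> 3 * x + 4 * y" and "m \<equiv> x + 2 * y" and "t \<equiv> y"
  defines "G \<equiv> b * (3 * a - 1) - 2 * t * a - a"
  shows "four_reps_beyond a b m t G"
  unfolding four_reps_beyond_def
proof (intro allI impI)
  note P = ratio_products_bounds[OF assms(1-4)]
  note defs = a_def b_def m_def t_def G_def
  have b0: "b \<ge> 0" using assms(1-4) unfolding defs by simp
  fix s assume s: "0 \<le> s" "s < a"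
  consider "s < y - x" | "y - x \<le> s" "s < 2 * y - 2 * x" | "2 * y - 2 * x \<le> s" by linarith
  then show "four_reps_le a b m t s (G + a)"
  proof cases
    case 1
    show ?thesis
    proof (rule four_reps_le_intervalI[OF b0 s(1) 1, where ps = "[(0, 0), (1, 0), (2, 0), (2, 1)]"])
      show "b * (y - x - 1) + a * (2 * b) \<le> G + a"
        by (simp add: defs algebra_simps) (use P in linarith)
    qed (use assms(1-4) in \<open>simp_all add: defs\<close>)
  next
    case 2
    show ?thesis
    proof (rule four_reps_le_intervalI[OF b0 2, where ps = "[(0, 0), (1, 0), (1, 1), (2, 1)]"])
      show "b * (2 * y - 2 * x - 1) + a * (2 * b - t) \<le> G + a"
        by (simp add: defs algebra_simps) (use P in linarith)
    qed (use assms(1-4) in \<open>simp_all add: defs\<close>)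
  next
    case 3
    show ?thesis
    proof (rule four_reps_le_intervalI[OF b0 3 s(2), where ps = "[(0, 0), (1, 0), (1, 1), (2, 2)]"])
      show "b * (a - 1) + a * (2 * b - 2 * t) \<le> G + a" by (simp add: defs algebra_simps)
    qed (use assms(1-4) in \<open>simp_all add: defs\<close>)
  qed
qed

lemma three_reps_at_shift_2:
  fixes x y :: int
  assumes "1 \<le> x" "x \<le> y" "y \<le> 2 * x" "3 * x \<le> 2 * y"
  defines "a \<equiv> 2 * x + y" and "b \<equiv> 3 * x + 4 * y" and "m \<equiv> x + 2 * y" and "t \<equiv> y"
  defines "G \<equiv> b * (3 * a - 1) - 2 * t * a - a"
  shows "three_reps_at a b m t G"
proof -
  note P = ratio_products_bounds[OF assms(1-4)]
  note defs = a_def b_def m_def t_def G_def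
  have "lattice_reps a b m t (a - 1) (2 * b - 2 * t - 1) \<subseteq> {(0, 0), (1, 0), (1, 1)}"
  proof (rule subrelI)
    fix j z assume p: "(j, z) \<in> lattice_reps a b m t (a - 1) (2 * b - 2 * t - 1)"
    have "j < 3"
    proof (rule lattice_reps_fst_less[OF _ _ _ _ p])
      show "m * (2 * b - 2 * t - 1) < int 3 * (m * b - t * a) - t * (a - 1)"
        by (simp add: defs algebra_simps) (use assms(1-4) P in linarith)
      show "m * b - t * a > 0" by (simp add: defs algebra_simps) (use assms(1-4) P in linarith)
    qed (use assms(1-4) in \<open>simp_all add: defs\<close>)
    then consider "j = 0" | "j = 1" | "j = 2" by linarith
    then show "(j, z) \<in> {(0, 0), (1, 0), (1, 1)}"
    proof cases
      case 1
      then have "int z \<le> 0"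
        by (intro lattice_reps_snd_le[OF _ p]) (use assms(1-4) in \<open>simp_all add: defs\<close>)
      then show ?thesis using 1 by auto
    next
      case 2
      then have "int z \<le> 1"
        by (intro lattice_reps_snd_le[OF _ p]) (use assms(1-4) in \<open>simp_all add: defs\<close>)
      then have "z = 0 \<or> z = 1" by linarith
      then show ?thesis using 2 by auto
    next
      case 3
      then have "int z \<le> 2"
        by (intro lattice_reps_snd_le[OF _ p]) (use assms(1-4) in \<open>simp_all add: defs\<close>)
      then have "z = 0 \<or> z = 1 \<or> z = 2" by linarith
      then show ?thesis using p 3 assms(1-4) by (auto simp: defs)
    qed
  qed
  then show ?thesis
    by (rule three_reps_atI[rotated 3]) (use assms(1-4) in \<open>simp_all add: defs algebra_simps\<close>)
qed

lemma four_reps_beyond_shift_1: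
  fixes x y :: int
  assumes "1 \<le> x" "x \<le> y" "y \<le> 2 * x" "3 * x \<le> 2 * y"
  defines "a \<equiv> 2 * x + y" and "b \<equiv> 3 * x + 4 * y" and "m \<equiv> x + y" and "t \<equiv> x"
  defines "G \<equiv> b * (4 * x + 3 * y - 1) - 3 * t * a - a"
  shows "four_reps_beyond a b m t G"
  unfolding four_reps_beyond_def
proof (intro allI impI)
  note P = ratio_products_bounds[OF assms(1-4)]
  note defs = a_def b_def m_def t_def G_def
  have b0: "b \<ge> 0" using assms(1-4) unfolding defs by simp
  fix s assume s: "0 \<le> s" "s < a"
  consider "s < y - x" | "y - x \<le> s" "s < y" | "y \<le> s" "s < x + y" | "x + y \<le> s" by linarith
  then show "four_reps_le a b m t s (G + a)"
  proof cases
    case 1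
    show ?thesis
    proof (rule four_reps_le_intervalI[OF b0 s(1) 1, where ps = "[(0, 0), (1, 0), (1, 1), (2, 2)]"])
      show "b * (y - x - 1) + a * (2 * b - 2 * t) \<le> G + a"
        by (simp add: defs algebra_simps) (use P in linarith)
    qed (use assms(1-4) in \<open>simp_all add: defs\<close>)
  next
    case 2
    show ?thesis
    proof (rule four_reps_le_intervalI[OF b0 2, where ps = "[(0, 0), (1, 0), (1, 1), (2, 3)]"])
      show "b * (y - 1) + a * (2 * b - 3 * t) \<le> G + a" by (simp add: defs algebra_simps)
    qed (use assms(1-4) in \<open>simp_all add: defs\<close>)
  next
    case 3
    show ?thesis
    proof (rule four_reps_le_intervalI[OF b0 3, where ps = "[(0, 0), (1, 0), (1, 1), (1, 2)]"])
      show "b * (x + y - 1) + a * b \<le> G + a"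
        by (simp add: defs algebra_simps) (use P in linarith)
    qed (use assms(1-4) in \<open>simp_all add: defs\<close>)
  next
    case 4
    show ?thesis
    proof (rule four_reps_le_intervalI[OF b0 4 s(2), where ps = "[(0, 0), (0, 1), (1, 1), (1, 2)]"])
      show "b * (a - 1) + a * (b - t) \<le> G + a"
        by (simp add: defs algebra_simps) (use P in linarith)
    qed (use assms(1-4) in \<open>simp_all add: defs\<close>)
  qed
qed

lemma three_reps_at_shift_1:
  fixes x y :: int
  assumes "1 \<le> x" "x \<le> y" "y \<le> 2 * x" "3 * x \<le> 2 * y"
  defines "a \<equiv> 2 * x + y" and "b \<equiv> 3 * x + 4 * y" and "m \<equiv> x + y" and "t \<equiv> x"
  defines "G \<equiv> b * (4 * x + 3 * y - 1) - 3 * t * a - a"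
  shows "three_reps_at a b m t G"
proof -
  note P = ratio_products_bounds[OF assms(1-4)]
  note defs = a_def b_def m_def t_def G_def
  have "lattice_reps a b m t (y - 1) (2 * b - 3 * t - 1) \<subseteq> {(0, 0), (1, 0), (1, 1)}"
  proof (rule subrelI)
    fix j z assume p: "(j, z) \<in> lattice_reps a b m t (y - 1) (2 * b - 3 * t - 1)"
    have "j < 3"
    proof (rule lattice_reps_fst_less[OF _ _ _ _ p])
      show "m * (2 * b - 3 * t - 1) < int 3 * (m * b - t * a) - t * (y - 1)"
        by (simp add: defs algebra_simps) (use assms(1-4) P in linarith)
      show "m * b - t * a > 0" by (simp add: defs algebra_simps) (use assms(1-4) P in linarith)
    qed (use assms(1-4) in \<open>simp_all add: defs\<close>)
    then consider "j = 0" | "j = 1" | "j = 2" by linarith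
    then show "(j, z) \<in> {(0, 0), (1, 0), (1, 1)}"
    proof cases
      case 1
      then have "int z \<le> 0"
        by (intro lattice_reps_snd_le[OF _ p]) (use assms(1-4) in \<open>simp_all add: defs\<close>)
      then show ?thesis using 1 by auto
    next
      case 2
      then have "int z \<le> 1"
        by (intro lattice_reps_snd_le[OF _ p]) (use assms(1-4) in \<open>simp_all add: defs\<close>)
      then have "z = 0 \<or> z = 1" by linarith
      then show ?thesis using 2 by auto
    next
      case 3
      then have "int z \<le> 3"
        by (intro lattice_reps_snd_le[OF _ p]) (use assms(1-4) in \<open>simp_all add: defs\<close>)
      then have "z = 0 \<or> z = 1 \<or> z = 2 \<or> z = 3" by linarith
      then show ?thesis using p 3 assms(1-4) by (auto simp: defs)
    qed
  qed
  then show ?thesis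
    by (rule three_reps_atI[rotated 3]) (use assms(1-4) in \<open>simp_all add: defs algebra_simps\<close>)
qed

lemma four_reps_beyond_shift_0:
  fixes x y :: int
  assumes "1 \<le> x" "x \<le> y" "y \<le> 2 * x" "3 * x \<le> 2 * y" "3 * y \<le> 5 * x"
  defines "a \<equiv> 2 * x + y" and "b \<equiv> 3 * x + 4 * y" and "m \<equiv> y" and "t \<equiv> y - x"
  defines "G \<equiv> b * (2 * a - 1) - 4 * t * a - a"
  shows "four_reps_beyond a b m t G"
  unfolding four_reps_beyond_def
proof (intro allI impI)
  note P = ratio_products_bounds[OF assms(1-4)] ratio_products_bounds_tight[OF assms(1,2,5)]
  note defs = a_def b_def m_def t_def G_def
  have b0: "b \<ge> 0" using assms(1-4) unfolding defs by simp
  fix s assume s: "0 \<le> s" "s < a"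
  consider "s < 2 * y - 2 * x" | "2 * y - 2 * x \<le> s" "s < y" | "y \<le> s" "s < 3 * y - 2 * x"
    | "3 * y - 2 * x \<le> s" "s < 2 * y" | "2 * y \<le> s"
    using assms(1-5) by linarith
  then show "four_reps_le a b m t s (G + a)"
  proof cases
    case 1
    show ?thesis
    proof (rule four_reps_le_intervalI[OF b0 s(1) 1, where ps = "[(0, 0), (1, 0), (1, 1), (1, 2)]"])
      show "b * (2 * y - 2 * x - 1) + a * b \<le> G + a"
        by (simp add: defs algebra_simps) (use P in linarith)
    qed (use assms(1-5) in \<open>simp_all add: defs\<close>)
  next
    case 2
    show ?thesis
    proof (rule four_reps_le_intervalI[OF b0 2, where ps = "[(0, 0), (1, 1), (1, 2), (1, 3)]"])
      show "b * (y - 1) + a * (b - t) \<le> G + a"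
        by (simp add: defs algebra_simps) (use P in linarith)
    qed (use assms(1-5) in \<open>simp_all add: defs\<close>)
  next
    case 3
    show ?thesis
    proof (rule four_reps_le_intervalI[OF b0 3, where ps = "[(0, 0), (0, 1), (1, 2), (1, 3)]"])
      show "b * (3 * y - 2 * x - 1) + a * (b - 2 * t) \<le> G + a"
        by (simp add: defs algebra_simps) (use P in linarith)
    qed (use assms(1-5) in \<open>simp_all add: defs\<close>)
  next
    case 4
    show ?thesis
    proof (rule four_reps_le_intervalI[OF b0 4, where ps = "[(0, 0), (0, 1), (1, 3), (1, 4)]"])
      show "b * (2 * y - 1) + a * (b - 3 * t) \<le> G + a"
        by (simp add: defs algebra_simps) (use P in linarith)
    qed (use assms(1-5) in \<open>simp_all add: defs\<close>)
  next
    case 5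
    show ?thesis
    proof (rule four_reps_le_intervalI[OF b0 5 s(2), where ps = "[(0, 0), (0, 1), (0, 2), (1, 4)]"])
      show "b * (a - 1) + a * (b - 4 * t) \<le> G + a" by (simp add: defs algebra_simps)
    qed (use assms(1-5) in \<open>simp_all add: defs\<close>)
  qed
qed

lemma three_reps_at_shift_0:
  fixes x y :: int
  assumes "1 \<le> x" "x \<le> y" "y \<le> 2 * x" "3 * x \<le> 2 * y" "3 * y \<le> 5 * x"
  defines "a \<equiv> 2 * x + y" and "b \<equiv> 3 * x + 4 * y" and "m \<equiv> y" and "t \<equiv> y - x"
  defines "G \<equiv> b * (2 * a - 1) - 4 * t * a - a"
  shows "three_reps_at a b m t G"
proof -
  note P = ratio_products_bounds[OF assms(1-4)] ratio_products_bounds_tight[OF assms(1,2,5)]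
  note defs = a_def b_def m_def t_def G_def
  have "lattice_reps a b m t (a - 1) (b - 4 * t - 1) \<subseteq> {(0, 0), (0, 1), (0, 2)}"
  proof (rule subrelI)
    fix j z assume p: "(j, z) \<in> lattice_reps a b m t (a - 1) (b - 4 * t - 1)"
    have "j < 2"
    proof (rule lattice_reps_fst_less[OF _ _ _ _ p])
      show "m * (b - 4 * t - 1) < int 2 * (m * b - t * a) - t * (a - 1)"
        by (simp add: defs algebra_simps) (use assms(1-5) P in linarith)
      show "m * b - t * a > 0" by (simp add: defs algebra_simps) (use assms(1-5) P in linarith)
    qed (use assms(1-5) in \<open>simp_all add: defs\<close>)
    then consider "j = 0" | "j = 1" by linarith
    then show "(j, z) \<in> {(0, 0), (0, 1), (0, 2)}"
    proof cases
      case 1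
      then have "int z \<le> 2"
        by (intro lattice_reps_snd_le[OF _ p]) (use assms(1-5) in \<open>simp_all add: defs\<close>)
      then have "z = 0 \<or> z = 1 \<or> z = 2" by linarith
      then show ?thesis using 1 by auto
    next
      case 2
      then have "int z \<le> 4"
        by (intro lattice_reps_snd_le[OF _ p]) (use assms(1-5) in \<open>simp_all add: defs\<close>)
      then have "z = 0 \<or> z = 1 \<or> z = 2 \<or> z = 3 \<or> z = 4" by linarith
      then show ?thesis using p 2 assms(1-5) by (auto simp: defs)
    qed
  qed
  then show ?thesis
    by (rule three_reps_atI[rotated 3]) (use assms(1-5) in \<open>simp_all add: defs algebra_simps\<close>)
qed

text \<open>For i = 3 the condition 3 y \<le> 5 x fails, and L_6 needs its own configuration.\<close>

lemma four_reps_beyond_lucas_3_5_6: "four_reps_beyond 4 11 2 1 65"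
  unfolding four_reps_beyond_def
proof (intro allI impI)
  fix s :: int assume s: "0 \<le> s" "s < 4"
  consider "s < 2" | "2 \<le> s" by linarith
  then show "four_reps_le 4 11 2 1 s (65 + 4)"
  proof cases
    case 1
    show ?thesis
      by (rule four_reps_le_intervalI[OF _ s(1) 1, where ps = "[(0, 0), (1, 0), (1, 1), (1, 2)]" and v = 11])
        simp_all
  next
    case 2
    show ?thesis
      by (rule four_reps_le_intervalI[OF _ 2 s(2), where ps = "[(0, 0), (0, 1), (1, 2), (1, 3)]" and v = 9])
        simp_all
  qed
qed

lemma three_reps_at_lucas_3_5_6: "three_reps_at 4 11 2 1 65"
proof -
  have "lattice_reps 4 11 2 1 3 8 \<subseteq> {(0, 0), (0, 1), (1, 3)}"
  proof (rule subrelI)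
    fix j z assume p: "(j, z) \<in> lattice_reps 4 11 2 1 3 8"
    then have "j < 2" by (rule lattice_reps_fst_less[rotated 4]) simp_all
    with p have "int z \<le> 3" by simp
    then have "z = 0 \<or> z = 1 \<or> z = 2 \<or> z = 3" by linarith
    moreover have "j = 0 \<or> j = 1" using \<open>j < 2\<close> by linarith
    ultimately show "(j, z) \<in> {(0, 0), (0, 1), (1, 3)}" using p by auto
  qed
  then show ?thesis by (rule three_reps_atI[rotated 3]) simp_all
qed

section \<open>Large and small shifts\<close>

lemma four_reps_beyond_large_shift:
  fixes a b m t :: int
  assumes "1 \<le> a" "0 \<le> b"
  shows "four_reps_beyond a b m t ((4 * a - 1) * b - a)"
  unfolding four_reps_beyond_def
proof (intro allI impI)
  fix s assume s: "0 \<le> s" "s < a"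
  show "four_reps_le a b m t s ((4 * a - 1) * b - a + a)"
    by (rule four_reps_le_intervalI[OF assms(2) s,
          where ps = "[(0, 0), (1, 0), (2, 0), (3, 0)]" and v = "3 * b"])
      (use assms in \<open>simp_all add: algebra_simps\<close>)
qed

lemma three_reps_at_large_shift:
  fixes a b m t :: int
  assumes "1 \<le> a" "4 * a \<le> m" "2 * t \<le> m" "5 * a \<le> 2 * b" "0 \<le> t"
  shows "three_reps_at a b m t ((4 * a - 1) * b - a)"
proof -
  have "5 * (t * a) \<le> m * b"
    using mult_mono[OF assms(3,4)] assms by (simp add: algebra_simps)
  have "lattice_reps a b m t (a - 1) (3 * b - 1) \<subseteq> {(0, 0), (1, 0), (2, 0)}"
  proof (rule subrelI)
    fix j z assume p: "(j, z) \<in> lattice_reps a b m t (a - 1) (3 * b - 1)"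
    have "j < 4"
    proof (rule lattice_reps_fst_less[OF _ _ _ _ p])
      show "m * (3 * b - 1) < int 4 * (m * b - t * a) - t * (a - 1)"
        using \<open>5 * (t * a) \<le> m * b\<close> assms by (simp add: algebra_simps)
      show "m * b - t * a > 0" using \<open>5 * (t * a) \<le> m * b\<close> assms by (smt (verit) mult_pos_pos)
    qed (use assms in simp_all)
    then have "int j * a \<le> 3 * a" using assms(1) by (intro mult_right_mono) auto
    then have "a - 1 + int j * a < m" using assms(2) by linarith
    then have "int z \<le> 0" using assms by (intro lattice_reps_snd_le[OF _ p]) simp_all
    moreover have "j = 0 \<or> j = 1 \<or> j = 2 \<or> j = 3" using \<open>j < 4\<close> by linarith
    ultimately show "(j, z) \<in> {(0, 0), (1, 0), (2, 0)}" using p by auto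
  qed
  then show ?thesis
    by (rule three_reps_atI[rotated 3]) (use assms in \<open>simp_all add: algebra_simps\<close>)
qed

text \<open>Here r = (a - 1) div m, as expressed by the two quotient bounds.\<close>

context
  fixes a b m t r :: int
  assumes b_ge: "2 * a + 1 \<le> b" and m_ge: "2 * t \<le> m" and t_ge: "1 \<le> t" and r_ge: "3 \<le> r"
    and quot_lower: "r * m + 1 \<le> a" and quot_upper: "a \<le> (r + 1) * m"
begin

lemma small_shift_basics:
  shows "0 < m" "0 < a" "(r + 3) * t + 1 \<le> b" "4 * (a * t) \<le> b * m" "0 < m * b - t * a"
proof -
  show "0 < m" using m_ge t_ge by linarith
  then show "0 < a" using quot_lower r_ge by (smt (verit) mult_pos_pos)
  have "2 * (r * t) \<le> r * m" using m_ge r_ge by (simp add: mult_left_mono)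
  moreover have "t \<le> r * t" using r_ge t_ge by (simp add: mult_le_cancel_right1)
  ultimately show "(r + 3) * t + 1 \<le> b" using b_ge quot_lower by (simp add: algebra_simps)
  have "(2 * a) * (2 * t) \<le> b * m" using b_ge m_ge \<open>0 < a\<close> t_ge by (intro mult_mono) auto
  then show "4 * (a * t) \<le> b * m" by (simp add: algebra_simps)
  moreover have "0 < a * t" using \<open>0 < a\<close> t_ge by simp
  ultimately show "0 < m * b - t * a" by (simp add: algebra_simps)
qed

lemma four_reps_le_high_quotient:
  assumes "3 * m \<le> s" "s < a"
  shows "four_reps_le a b m t s ((m - 1) * b + (r + 2) * (m * b - t * a))"
proof -
  note basics = small_shift_basics
  define q where "q = s div m"
  have q: "m * q \<le> s" "s < m * q + m"
    unfolding q_def using pos_div_mult_bounds[OF basics(1)] by simp_all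
  have "3 \<le> q" using le_of_mult_le_less_mult[OF basics(1), of 3 s q] q assms by (simp add: algebra_simps)
  have "q \<le> r" using le_of_mult_le_less_mult[OF basics(1), of q s r] q assms quot_upper
    by (simp add: algebra_simps)
  then have "0 \<le> (r - q) * (m * b - t * a)" using basics(5) by simp
  show ?thesis
  proof (rule four_reps_le_intervalI[OF _ q,
        where ps = "[(0, nat q), (0, nat (q - 1)), (0, nat (q - 2)), (0, nat (q - 3))]"])
    show "b * (m * q + m - 1) + a * (- t * (q - 3)) \<le> (m - 1) * b + (r + 2) * (m * b - t * a)"
      using \<open>0 \<le> (r - q) * _\<close> basics \<open>3 \<le> q\<close> by (simp add: algebra_simps)
  qed (use basics \<open>3 \<le> q\<close> t_ge b_ge in \<open>auto simp: algebra_simps\<close>)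
qed

lemma four_reps_le_quotient_0:
  assumes "0 \<le> s" "s < m"
  shows "four_reps_le a b m t s ((a - r * m - 1) * b + (r + 3) * (m * b - t * a))"
proof -
  note basics = small_shift_basics
  have "0 \<le> b" "0 \<le> a * t" using b_ge basics(2) t_ge by simp_all
  define q where "q = (s + a) div m"
  have q: "m * q \<le> s + a" "s + a < m * q + m"
    unfolding q_def using pos_div_mult_bounds[OF basics(1)] by simp_all
  have "r \<le> q" using le_of_mult_le_less_mult[OF basics(1), of r "s + a" q] q quot_lower assms(1)
    by (simp add: algebra_simps)
  have "q \<le> r + 1" using le_of_mult_le_less_mult[OF basics(1), of q "s + a" "r + 1"] q quot_upper assms(2)
    by (simp add: algebra_simps)
  then have "t * q \<le> t * (r + 1)" using t_ge by simp
  then have mem: "set [(0, 0), (1, nat q), (1, nat (q - 1)), (1, nat (q - 2))]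
      \<subseteq> lattice_reps a b m t s (b - t * (q - 2))"
    using q \<open>r \<le> q\<close> r_ge t_ge basics(1,3) assms by (auto simp: algebra_simps)
  have "b * s \<le> b * (m - 1)" using assms(2) \<open>0 \<le> b\<close> by (intro mult_left_mono) auto
  moreover have "0 \<le> (q - r) * (a * t)" using \<open>r \<le> q\<close> \<open>0 \<le> a * t\<close> by simp
  ultimately have "0 \<le> (b * (m - 1) - b * s) + (2 * (b * m) - 5 * (a * t)) + (q - r) * (a * t)"
    using basics(4) \<open>0 \<le> a * t\<close> by linarith
  also have "\<dots> = (a - r * m - 1) * b + (r + 3) * (m * b - t * a) - (b * s + a * (b - t * (q - 2)))"
    by (simp add: algebra_simps)
  finally show ?thesis by (intro four_reps_leI[OF mem]) (use \<open>r \<le> q\<close> r_ge in auto)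
qed

lemma four_reps_le_quotient_1:
  assumes "m \<le> s" "s < 2 * m"
  shows "four_reps_le a b m t s ((a - r * m - 1) * b + (r + 3) * (m * b - t * a))"
proof -
  note basics = small_shift_basics
  have "0 \<le> b" "0 \<le> a * t" using b_ge basics(2) t_ge by simp_all
  define q where "q = (s + a) div m"
  have q: "m * q \<le> s + a" "s + a < m * q + m"
    unfolding q_def using pos_div_mult_bounds[OF basics(1)] by simp_all
  have "r + 1 \<le> q" using le_of_mult_le_less_mult[OF basics(1), of "r + 1" "s + a" q] q quot_lower assms(1)
    by (simp add: algebra_simps)
  have "q \<le> r + 2" using le_of_mult_le_less_mult[OF basics(1), of q "s + a" "r + 2"] q quot_upper assms(2)
    by (simp add: algebra_simps)
  then have "t * q \<le> t * (r + 2)" using t_ge by simp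
  then have mem: "set [(0, 0), (0, 1), (1, nat q), (1, nat (q - 1))]
      \<subseteq> lattice_reps a b m t s (b - t * (q - 1))"
    using q \<open>r + 1 \<le> q\<close> r_ge t_ge basics(1,3) assms by (auto simp: algebra_simps)
  have "b * s \<le> b * (2 * m - 1)" using assms(2) \<open>0 \<le> b\<close> by (intro mult_left_mono) auto
  moreover have "0 \<le> (q - 1 - r) * (a * t)" using \<open>r + 1 \<le> q\<close> \<open>0 \<le> a * t\<close> by simp
  ultimately have "0 \<le> (b * (2 * m - 1) - b * s) + (b * m - 3 * (a * t)) + (q - 1 - r) * (a * t)"
    using basics(4) \<open>0 \<le> a * t\<close> by linarith
  also have "\<dots> = (a - r * m - 1) * b + (r + 3) * (m * b - t * a) - (b * s + a * (b - t * (q - 1)))"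
    by (simp add: algebra_simps)
  finally show ?thesis by (intro four_reps_leI[OF mem]) (use \<open>r + 1 \<le> q\<close> r_ge in auto)
qed

lemma four_reps_le_quotient_2:
  assumes "2 * m \<le> s" "s < 3 * m"
  shows "four_reps_le a b m t s (max ((a - r * m - 1) * b + (r + 3) * (m * b - t * a))
    ((m - 1) * b + (r + 2) * (m * b - t * a)))"
    (is "four_reps_le a b m t s (max ?tp ?sc)")
proof -
  note basics = small_shift_basics
  have "0 \<le> b" using b_ge basics(2) by simp
  define q where "q = (s + a) div m"
  have q: "m * q \<le> s + a" "s + a < m * q + m"
    unfolding q_def using pos_div_mult_bounds[OF basics(1)] by simp_all
  have "0 < m * (q + 1)" using q assms basics(1,2) by (simp add: algebra_simps)
  then have "0 \<le> q" using basics(1) by (simp add: zero_less_mult_iff)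
  have "q \<le> r + 3" using le_of_mult_le_less_mult[OF basics(1), of q "s + a" "r + 3"] q quot_upper assms(2)
    by (simp add: algebra_simps)
  then have "t * q \<le> t * (r + 3)" using t_ge by simp
  then have mem: "set [(0, 0), (0, 1), (0, 2), (1, nat q)] \<subseteq> lattice_reps a b m t s (b - t * q)"
    using q \<open>0 \<le> q\<close> r_ge t_ge basics(1,3) assms by (auto simp: algebra_simps)
  have "b * s + a * (b - t * q) \<le> max ?tp ?sc"
  proof (cases "q = r + 3")
    case True
    have "b * s \<le> b * (3 * m - 1)" using assms \<open>0 \<le> b\<close> by (intro mult_left_mono) auto
    then have "0 \<le> b * (3 * m - 1) - b * s" by simp
    also have "\<dots> = ?tp - (b * s + a * (b - t * q))" using True by (simp add: algebra_simps)
    finally show ?thesis by simp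
  next
    case False
    have "b * (s + a) \<le> b * (m * q + m - 1)" using q \<open>0 \<le> b\<close> by (intro mult_left_mono) auto
    moreover have "0 \<le> (r + 2 - q) * (m * b - t * a)" using False \<open>q \<le> r + 3\<close> basics by simp
    ultimately have "0 \<le> (b * (m * q + m - 1) - b * (s + a)) + (r + 2 - q) * (m * b - t * a)" by simp
    also have "\<dots> = ?sc - (b * s + a * (b - t * q))" by (simp add: algebra_simps)
    finally show ?thesis by simp
  qed
  then show ?thesis by (intro four_reps_leI[OF mem]) auto
qed

lemma three_reps_at_small_shift_high:
  assumes "t * a \<le> b * (a - r * m)"
  shows "three_reps_at a b m t ((a - r * m - 1) * b + (r + 3) * (m * b - t * a) - a)"
proof (rule three_reps_atI)
  note basics = small_shift_basics
  have "3 * m \<le> r * m" using r_ge basics(1) by simp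
  then show "0 \<le> 3 * m - 1" "3 * m - 1 < a" using basics(1) quot_lower by linarith+
  show "(a - r * m - 1) * b + (r + 3) * (m * b - t * a) - a = b * (3 * m - 1) + a * (b - (r + 3) * t - 1)"
    by (simp add: algebra_simps)
  show "lattice_reps a b m t (3 * m - 1) (b - (r + 3) * t - 1) \<subseteq> {(0, 0), (0, 1), (0, 2)}"
  proof (rule subrelI)
    fix j z assume p: "(j, z) \<in> lattice_reps a b m t (3 * m - 1) (b - (r + 3) * t - 1)"
    have "a * t \<le> (r + 1) * m * t" using quot_upper t_ge by (simp add: mult_right_mono)
    moreover have "(r + 2) * t \<le> b" using basics(3) t_ge by (simp add: algebra_simps)
    then have "m * ((r + 2) * t) \<le> m * b" using basics(1) by simp
    ultimately have "0 < (m * b - m * ((r + 2) * t)) + 2 * ((r + 1) * m * t - a * t) + t + m"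
      using basics(1) t_ge by (simp only: algebra_simps)
    also have "\<dots> = int 2 * (m * b - t * a) - t * (3 * m - 1) - m * (b - (r + 3) * t - 1)"
      by (simp add: algebra_simps)
    finally have "j < 2" using basics t_ge by (intro lattice_reps_fst_less[OF _ _ _ _ p]) simp_all
    then consider "j = 0" | "j = 1" by linarith
    then show "(j, z) \<in> {(0, 0), (0, 1), (0, 2)}"
    proof cases
      case 1
      then have "int z \<le> 2" using basics(1) by (intro lattice_reps_snd_le[OF _ p]) simp_all
      then have "z = 0 \<or> z = 1 \<or> z = 2" by linarith
      then show ?thesis using 1 by auto
    next
      case 2
      then have "int z \<le> r + 3"
        using basics(1) quot_upper by (intro lattice_reps_snd_le[OF _ p]) (simp_all add: algebra_simps)
      then have "t * int z \<le> t * (r + 3)" using t_ge by simp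
      then show ?thesis using p 2 by (simp add: algebra_simps)
    qed
  qed
qed

lemma three_reps_at_small_shift_low:
  assumes "b * (a - r * m) < t * a"
  shows "three_reps_at a b m t ((m - 1) * b + (r + 2) * (m * b - t * a) - a)"
proof (rule three_reps_atI)
  note basics = small_shift_basics
  have "a \<noteq> (r + 1) * m"
  proof
    assume "a = (r + 1) * m"
    then have "b * m < t * a" using assms by (simp add: algebra_simps)
    then show False using basics(5) by (simp add: algebra_simps)
  qed
  then have a_le: "a \<le> (r + 1) * m - 1" using quot_upper by linarith
  have "3 * m \<le> r * m" using r_ge basics(1) by simp
  then show "0 \<le> (r + 3) * m - 1 - a" using a_le basics(1) by (simp only: algebra_simps)
  show "(r + 3) * m - 1 - a < a" using \<open>3 * m \<le> r * m\<close> quot_lower by (simp only: algebra_simps)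
  show "(m - 1) * b + (r + 2) * (m * b - t * a) - a = b * ((r + 3) * m - 1 - a) + a * (b - (r + 2) * t - 1)"
    by (simp add: algebra_simps)
  show "lattice_reps a b m t ((r + 3) * m - 1 - a) (b - (r + 2) * t - 1) \<subseteq> {(0, 0), (0, 1), (0, 2)}"
  proof (rule subrelI)
    fix j z assume p: "(j, z) \<in> lattice_reps a b m t ((r + 3) * m - 1 - a) (b - (r + 2) * t - 1)"
    have "t * ((r + 3) * m - 1 - a) \<le> t * (3 * m - 2)"
      using quot_lower t_ge by (intro mult_left_mono) (simp_all add: algebra_simps)
    moreover have "a * t \<le> ((r + 1) * m - 1) * t" using a_le t_ge by (simp add: mult_right_mono)
    moreover have "m * ((r + 3) * t + 1) \<le> m * b" using basics(1,3) by (simp add: mult_left_mono)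
    ultimately have "0 < (m * b - m * ((r + 3) * t + 1)) + 2 * (((r + 1) * m - 1) * t - a * t)
        + (t * (3 * m - 2) - t * ((r + 3) * m - 1 - a)) + 2 * m + 4 * t"
      using basics(1) t_ge by (simp only: algebra_simps)
    also have "\<dots> = int 2 * (m * b - t * a) - t * ((r + 3) * m - 1 - a) - m * (b - (r + 2) * t - 1)"
      by (simp add: algebra_simps)
    finally have "j < 2" using basics t_ge by (intro lattice_reps_fst_less[OF _ _ _ _ p]) simp_all
    then consider "j = 0" | "j = 1" by linarith
    then show "(j, z) \<in> {(0, 0), (0, 1), (0, 2)}"
    proof cases
      case 1
      then have "int z \<le> 2"
        using basics(1) quot_lower by (intro lattice_reps_snd_le[OF _ p]) (simp_all add: algebra_simps)
      then have "z = 0 \<or> z = 1 \<or> z = 2" by linarith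
      then show ?thesis using 1 by auto
    next
      case 2
      then have "int z \<le> r + 2"
        using basics(1) by (intro lattice_reps_snd_le[OF _ p]) (simp_all add: algebra_simps)
      then have "t * int z \<le> t * (r + 2)" using t_ge by simp
      then show ?thesis using p 2 by (simp add: algebra_simps)
    qed
  qed
qed

lemma four_reps_beyond_small_shift:
  defines "tp \<equiv> (a - r * m - 1) * b + (r + 3) * (m * b - t * a) - a"
    and "sc \<equiv> (m - 1) * b + (r + 2) * (m * b - t * a) - a"
  shows "four_reps_beyond a b m t (if t * a \<le> (a - r * m) * b then tp else sc)"
  unfolding four_reps_beyond_def
proof (intro allI impI)
  have "tp - sc = (a - r * m) * b - t * a" unfolding tp_def sc_def by (simp add: algebra_simps)
  then have G: "(if t * a \<le> (a - r * m) * b then tp else sc) + a = max (tp + a) (sc + a)" by auto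
  fix s assume s: "0 \<le> s" "s < a"
  consider "s < m" | "m \<le> s" "s < 2 * m" | "2 * m \<le> s" "s < 3 * m" | "3 * m \<le> s" by linarith
  then have "four_reps_le a b m t s (max (tp + a) (sc + a))"
  proof cases
    case 1
    show ?thesis using four_reps_le_quotient_0[OF s(1) 1] by (rule four_reps_le_mono) (simp add: tp_def)
  next
    case 2
    show ?thesis using four_reps_le_quotient_1[OF 2] by (rule four_reps_le_mono) (simp add: tp_def)
  next
    case 3
    show ?thesis using four_reps_le_quotient_2[OF 3] by (simp add: tp_def sc_def)
  next
    case 4
    show ?thesis
      using four_reps_le_high_quotient[OF 4 s(2)] by (rule four_reps_le_mono) (simp add: sc_def)
  qed
  then show "four_reps_le a b m t s ((if t * a \<le> (a - r * m) * b then tp else sc) + a)"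
    unfolding G .
qed

lemma three_reps_at_small_shift:
  "three_reps_at a b m t (if t * a \<le> (a - r * m) * b
     then (a - r * m - 1) * b + (r + 3) * (m * b - t * a) - a
     else (m - 1) * b + (r + 2) * (m * b - t * a) - a)"
  using three_reps_at_small_shift_high three_reps_at_small_shift_low by (simp add: algebra_simps)

end

lemma p_frobenius_lucas_eqI:
  assumes "four_reps_beyond (int (lucas i)) (int (lucas (i + 2))) (int (fib (k + 2))) (int (fib k)) G"
    and "three_reps_at (int (lucas i)) (int (lucas (i + 2))) (int (fib (k + 2))) (int (fib k)) G"
  shows "p_frobenius 3 [lucas i, lucas (i + 2), lucas (i + k + 2)] = G"
proof -
  have c: "int (fib (k + 2)) * int (lucas (i + 2)) - int (fib k) * int (lucas i) = int (lucas (i + k + 2))"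
    by (rule lucas_add[symmetric])
  have "p_frobenius 3 [nat (int (lucas i)), nat (int (lucas (i + 2))),
      nat (int (fib (k + 2)) * int (lucas (i + 2)) - int (fib k) * int (lucas i))] = G"
  proof (rule p_frobenius_3_eqI)
    show "0 < int (fib (k + 2)) * int (lucas (i + 2)) - int (fib k) * int (lucas i)"
      unfolding c by (simp add: lucas_pos del: lucas.simps)
    show "coprime (int (lucas i)) (int (lucas (i + 2)))"
      using coprime_lucas_add_2 by (simp only: coprime_int_iff)
    show "0 < int (fib (k + 2))" using fib_neq_0_nat[of "k + 2"] by (simp del: fib.simps)
  qed (use assms lucas_pos in auto)
  then show ?thesis unfolding c nat_int .
qed

lemma lucas_fib_coords:
  assumes "3 \<le> i"
  shows "int (lucas i) = 2 * int (fib (i - 1)) + int (fib i)"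
    "int (lucas (i + 2)) = 3 * int (fib (i - 1)) + 4 * int (fib i)"
    "int (fib (i + 1)) = int (fib (i - 1)) + int (fib i)"
    "int (fib (i + 2)) = int (fib (i - 1)) + 2 * int (fib i)"
    "int (fib (i + 3)) = 2 * int (fib (i - 1)) + 3 * int (fib i)"
    "int (fib (i + 4)) = 3 * int (fib (i - 1)) + 5 * int (fib i)"
    "int (fib (i + 5)) = 5 * int (fib (i - 1)) + 8 * int (fib i)"
    "int (fib (i - 2)) = int (fib i) - int (fib (i - 1))"
    "int (fib (i - 3)) = 2 * int (fib (i - 1)) - int (fib i)"
proof -
  define n where "n = i - 3"
  have n: "i = Suc (Suc (Suc n))" using assms unfolding n_def by simp
  show "int (lucas i) = 2 * int (fib (i - 1)) + int (fib i)"
    "int (lucas (i + 2)) = 3 * int (fib (i - 1)) + 4 * int (fib i)"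
    unfolding n using lucas_Suc_eq_fib by (simp_all add: numeral_eq_Suc del: lucas.simps)
  show "int (fib (i + 1)) = int (fib (i - 1)) + int (fib i)"
    "int (fib (i + 2)) = int (fib (i - 1)) + 2 * int (fib i)"
    "int (fib (i + 3)) = 2 * int (fib (i - 1)) + 3 * int (fib i)"
    "int (fib (i + 4)) = 3 * int (fib (i - 1)) + 5 * int (fib i)"
    "int (fib (i + 5)) = 5 * int (fib (i - 1)) + 8 * int (fib i)"
    "int (fib (i - 2)) = int (fib i) - int (fib (i - 1))"
    "int (fib (i - 3)) = 2 * int (fib (i - 1)) - int (fib i)"
    unfolding n by (simp_all add: eval_nat_numeral)
qed

lemma fib_pred_ratio:
  assumes "3 \<le> i"
  shows "1 \<le> int (fib (i - 1))" "int (fib (i - 1)) \<le> int (fib i)"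
    "int (fib i) \<le> 2 * int (fib (i - 1))" "3 * int (fib (i - 1)) \<le> 2 * int (fib i)"
proof -
  define n where "n = i - 3"
  have n: "i = Suc (Suc (Suc n))" using assms unfolding n_def by simp
  have "fib n \<le> fib (Suc n)" "1 \<le> fib (Suc n)"
    using fib_Suc_mono[of n] fib_neq_0_nat[of "Suc n"] by simp_all
  then show "1 \<le> int (fib (i - 1))" "int (fib (i - 1)) \<le> int (fib i)"
    "int (fib i) \<le> 2 * int (fib (i - 1))" "3 * int (fib (i - 1)) \<le> 2 * int (fib i)"
    unfolding n by simp_all
qed

theorem p_frobenius_lucas_far:
  assumes "3 \<le> i" "i + 5 \<le> k"
  shows "p_frobenius 3 [lucas i, lucas (i + 2), lucas (i + k)]
    = (4 * int (lucas i) - 1) * int (lucas (i + 2)) - int (lucas i)"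
proof -
  define x y where "x = int (fib (i - 1))" and "y = int (fib i)"
  note X = lucas_fib_coords[OF assms(1), folded x_def y_def]
  note R = fib_pred_ratio[OF assms(1), folded x_def y_def]
  have idx: "i + k = i + (k - 2) + 2" and k: "k - 2 + 2 = k" using assms(2) by simp_all
  have "int (fib (i + 5)) \<le> int (fib k)" using fib_mono[OF assms(2)] by simp
  then have "4 * int (lucas i) \<le> int (fib k)" unfolding X using R by simp
  moreover have "2 * int (fib (k - 2)) \<le> int (fib k)"
    using fib_Suc_mono[of "k - 2"] k fib_plus_2[of "k - 2"] by simp
  moreover have "1 \<le> int (lucas i)" "5 * int (lucas i) \<le> 2 * int (lucas (i + 2))"
    unfolding X using R by simp_all
  ultimately show ?thesis
    unfolding idx
    by (intro p_frobenius_lucas_eqI four_reps_beyond_large_shift three_reps_at_large_shift)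
      (unfold k, simp_all)
qed

theorem p_frobenius_lucas_2i_4:
  assumes "3 \<le> i"
  shows "p_frobenius 3 [lucas i, lucas (i + 2), lucas (2 * i + 4)]
    = (4 * int (fib (i - 1)) - int (fib (i - 2)) - 1) * int (lucas (i + 2)) + int (lucas (2 * i + 4))
      - int (lucas i)"
proof -
  define x y where "x = int (fib (i - 1))" and "y = int (fib i)"
  note X = lucas_fib_coords[OF assms, folded x_def y_def]
  note R = fib_pred_ratio[OF assms, folded x_def y_def]
  have idx: "2 * i + 4 = i + (i + 2) + 2"
    and e: "i + 2 + 2 = i + 4"
    using assms by simp_all
  have "p_frobenius 3 [lucas i, lucas (i + 2), lucas (i + (i + 2) + 2)]
      = (4 * (2 * x + y) - 1) * (3 * x + 4 * y) - (x + 2 * y) * (2 * x + y) - (2 * x + y)"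
    by (rule p_frobenius_lucas_eqI) (unfold e X x_def[symmetric] y_def[symmetric],
      rule four_reps_beyond_shift_4[OF R], rule three_reps_at_shift_4[OF R])
  then show ?thesis
    unfolding idx lucas_add e X x_def[symmetric] y_def[symmetric] by (simp add: algebra_simps)
qed

theorem p_frobenius_lucas_2i_3:
  assumes "3 \<le> i"
  shows "p_frobenius 3 [lucas i, lucas (i + 2), lucas (2 * i + 3)]
    = (4 * int (fib (i + 1)) - 1) * int (lucas (i + 2)) - int (lucas i)"
proof -
  define x y where "x = int (fib (i - 1))" and "y = int (fib i)"
  note X = lucas_fib_coords[OF assms, folded x_def y_def]
  note R = fib_pred_ratio[OF assms, folded x_def y_def]
  have idx: "2 * i + 3 = i + (i + 1) + 2"
    and e: "i + 1 + 2 = i + 3"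
    using assms by simp_all
  have "p_frobenius 3 [lucas i, lucas (i + 2), lucas (i + (i + 1) + 2)]
      = (4 * (x + y) - 1) * (3 * x + 4 * y) - (2 * x + y)"
    by (rule p_frobenius_lucas_eqI) (unfold e X x_def[symmetric] y_def[symmetric],
      rule four_reps_beyond_shift_3[OF R], rule three_reps_at_shift_3[OF R])
  then show ?thesis
    unfolding idx lucas_add e X x_def[symmetric] y_def[symmetric] by (simp add: algebra_simps)
qed

theorem p_frobenius_lucas_2i_2:
  assumes "3 \<le> i"
  shows "p_frobenius 3 [lucas i, lucas (i + 2), lucas (2 * i + 2)]
    = (int (fib i) + 2 * int (fib (i - 3)) - 1) * int (lucas (i + 2)) + 2 * int (lucas (2 * i + 2))
      - int (lucas i)"
proof -
  define x y where "x = int (fib (i - 1))" and "y = int (fib i)"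
  note X = lucas_fib_coords[OF assms, folded x_def y_def]
  note R = fib_pred_ratio[OF assms, folded x_def y_def]
  have idx: "2 * i + 2 = i + i + 2"
    using assms by simp_all
  have "p_frobenius 3 [lucas i, lucas (i + 2), lucas (i + i + 2)]
      = (3 * x + 4 * y) * (3 * (2 * x + y) - 1) - 2 * y * (2 * x + y) - (2 * x + y)"
    by (rule p_frobenius_lucas_eqI) (unfold X x_def[symmetric] y_def[symmetric],
      rule four_reps_beyond_shift_2[OF R], rule three_reps_at_shift_2[OF R])
  then show ?thesis
    unfolding idx lucas_add X x_def[symmetric] y_def[symmetric] by (simp add: algebra_simps)
qed

theorem p_frobenius_lucas_2i_1:
  assumes "3 \<le> i"
  shows "p_frobenius 3 [lucas i, lucas (i + 2), lucas (2 * i + 1)]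
    = (int (fib (i - 1)) - 1) * int (lucas (i + 2)) + 3 * int (lucas (2 * i + 1)) - int (lucas i)"
proof -
  define x y where "x = int (fib (i - 1))" and "y = int (fib i)"
  note X = lucas_fib_coords[OF assms, folded x_def y_def]
  note R = fib_pred_ratio[OF assms, folded x_def y_def]
  have idx: "2 * i + 1 = i + (i - 1) + 2"
    and e: "i - 1 + 2 = i + 1"
    using assms by simp_all
  have "p_frobenius 3 [lucas i, lucas (i + 2), lucas (i + (i - 1) + 2)]
      = (3 * x + 4 * y) * (4 * x + 3 * y - 1) - 3 * x * (2 * x + y) - (2 * x + y)"
    by (rule p_frobenius_lucas_eqI) (unfold e X x_def[symmetric] y_def[symmetric],
      rule four_reps_beyond_shift_1[OF R], rule three_reps_at_shift_1[OF R])
  then show ?thesis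
    unfolding idx lucas_add e X x_def[symmetric] y_def[symmetric] by (simp add: algebra_simps)
qed

theorem p_frobenius_lucas_2i:
  assumes "4 \<le> i"
  shows "p_frobenius 3 [lucas i, lucas (i + 2), lucas (2 * i)]
    = (2 * int (fib (i - 3)) - 1) * int (lucas (i + 2)) + 4 * int (lucas (2 * i)) - int (lucas i)"
proof -
  have "3 \<le> i" using assms by simp
  define x y where "x = int (fib (i - 1))" and "y = int (fib i)"
  note X = lucas_fib_coords[OF \<open>3 \<le> i\<close>, folded x_def y_def]
  note R = fib_pred_ratio[OF \<open>3 \<le> i\<close>, folded x_def y_def]
  have "int (fib (i - 4)) \<le> int (fib (i - 3))" by (simp add: fib_mono)
  moreover have "i - 2 = i - 4 + 2" "i - 3 = i - 4 + 1" using assms by simp_all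
  then have "fib (i - 2) = fib (i - 3) + fib (i - 4)" using fib_plus_2[of "i - 4"] by simp
  ultimately have ratio: "3 * y \<le> 5 * x" using X by simp
  have idx: "2 * i = i + (i - 2) + 2"
    and e: "i - 2 + 2 = i"
    using assms by simp_all
  have "p_frobenius 3 [lucas i, lucas (i + 2), lucas (i + (i - 2) + 2)]
      = (3 * x + 4 * y) * (2 * (2 * x + y) - 1) - 4 * (y - x) * (2 * x + y) - (2 * x + y)"
    by (rule p_frobenius_lucas_eqI) (unfold e X x_def[symmetric] y_def[symmetric],
      rule four_reps_beyond_shift_0[OF R ratio], rule three_reps_at_shift_0[OF R ratio])
  then show ?thesis
    unfolding idx lucas_add e X x_def[symmetric] y_def[symmetric] by (simp add: algebra_simps)
qed

theorem p_frobenius_lucas_3_5_6: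
  "p_frobenius 3 [lucas 3, lucas 5, lucas 6] = 3 * int (lucas 5) + 2 * int (lucas 6) - int (lucas 3)"
proof -
  have "p_frobenius 3 [lucas 3, lucas (3 + 2), lucas (3 + 1 + 2)] = 65"
    by (rule p_frobenius_lucas_eqI)
      (simp_all add: eval_nat_numeral four_reps_beyond_lucas_3_5_6 three_reps_at_lucas_3_5_6)
  then show ?thesis by (simp add: eval_nat_numeral)
qed

theorem p_frobenius_lucas_near:
  assumes "3 \<le> i" "3 \<le> k"
  defines "r \<equiv> (int (lucas i) - 1) div int (fib k)"
  assumes "3 \<le> r"
  shows "p_frobenius 3 [lucas i, lucas (i + 2), lucas (i + k)]
    = (if int (fib (k - 2)) * int (lucas i) \<le> (int (lucas i) - r * int (fib k)) * int (lucas (i + 2))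
       then (int (lucas i) - r * int (fib k) - 1) * int (lucas (i + 2)) + (r + 3) * int (lucas (i + k))
         - int (lucas i)
       else (int (fib k) - 1) * int (lucas (i + 2)) + (r + 2) * int (lucas (i + k)) - int (lucas i))"
proof -
  define a b m t where "a = int (lucas i)" and "b = int (lucas (i + 2))"
    and "m = int (fib k)" and "t = int (fib (k - 2))"
  note X = lucas_fib_coords[OF assms(1)] and R = fib_pred_ratio[OF assms(1)]
  have idx: "i + k = i + (k - 2) + 2" and k: "k - 2 + 2 = k" using assms(2) by simp_all
  have c: "int (lucas (i + (k - 2) + 2)) = m * b - t * a"
    unfolding lucas_add k a_def b_def m_def t_def ..
  have "0 < m" unfolding m_def using fib_neq_0_nat[of k] assms(2) by simp
  have quot: "r * m + 1 \<le> a" "a \<le> (r + 1) * m"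
    using pos_div_mult_bounds[OF \<open>0 < m\<close>, of "a - 1"]
    unfolding r_def a_def[symmetric] m_def[symmetric] by (simp_all add: algebra_simps)
  have "2 * a + 1 \<le> b" unfolding a_def b_def X using R by simp
  have "2 * t \<le> m" unfolding m_def t_def using fib_Suc_mono[of "k - 2"] k fib_plus_2[of "k - 2"] by simp
  have "1 \<le> t" unfolding t_def using fib_neq_0_nat[of "k - 2"] assms(2) by simp
  note hyps = \<open>2 * a + 1 \<le> b\<close> \<open>2 * t \<le> m\<close> \<open>1 \<le> t\<close> assms(4) quot
  show ?thesis
    unfolding idx c
    by (rule p_frobenius_lucas_eqI, unfold k, fold a_def b_def m_def t_def)
      (rule four_reps_beyond_small_shift[OF hyps] three_reps_at_small_shift[OF hyps])+
qed

theorem theorem8: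
  fixes i k :: nat
  assumes "i \<ge> 3" and "k \<ge> 3"
  defines "L \<equiv> (\<lambda>m. int (lucas m))" and "F \<equiv> (\<lambda>m. int (fib m))"
  shows
   "(k \<ge> i + 5 \<longrightarrow>
       p_frobenius 3 [lucas i, lucas (i+2), lucas (i+k)]
         = (4 * L i - 1) * L (i+2) - L i)
    \<and> p_frobenius 3 [lucas i, lucas (i+2), lucas (2*i+4)]
         = (4 * F (i-1) - F (i-2) - 1) * L (i+2) + L (2*i+4) - L i
    \<and> p_frobenius 3 [lucas i, lucas (i+2), lucas (2*i+3)]
         = (4 * F (i+1) - 1) * L (i+2) - L i
    \<and> p_frobenius 3 [lucas i, lucas (i+2), lucas (2*i+2)]
         = (F i + 2 * F (i-3) - 1) * L (i+2) + 2 * L (2*i+2) - L i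
    \<and> p_frobenius 3 [lucas i, lucas (i+2), lucas (2*i+1)]
         = (F (i-1) - 1) * L (i+2) + 3 * L (2*i+1) - L i
    \<and> (i \<ge> 4 \<longrightarrow>
       p_frobenius 3 [lucas i, lucas (i+2), lucas (2*i)]
         = (2 * F (i-3) - 1) * L (i+2) + 4 * L (2*i) - L i)
    \<and> p_frobenius 3 [lucas 3, lucas 5, lucas 6] = 3 * L 5 + 2 * L 6 - L 3
    \<and> (let r = (L i - 1) div F k in
        r \<ge> 3 \<longrightarrow>
        p_frobenius 3 [lucas i, lucas (i+2), lucas (i+k)]
          = (if (L i - r * F k) * L (i+2) \<ge> F (k-2) * L i
             then (L i - r * F k - 1) * L (i+2) + (r + 3) * L (i+k) - L i
             else (F k - 1) * L (i+2) + (r + 2) * L (i+k) - L i))"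
  unfolding L_def F_def Let_def
  using p_frobenius_lucas_far[OF assms(1)] p_frobenius_lucas_2i_4[OF assms(1)]
    p_frobenius_lucas_2i_3[OF assms(1)] p_frobenius_lucas_2i_2[OF assms(1)]
    p_frobenius_lucas_2i_1[OF assms(1)] p_frobenius_lucas_2i p_frobenius_lucas_3_5_6
    p_frobenius_lucas_near[OF assms(1,2)]
  by blast

end
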